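(* Let $G=\varinjlim(\mathbb Z^{n+1},A^{(n)})$ be the inductive limit (the $K_0$-group of the GICAR algebra), where $A^{(n)}:\mathbb Z^{n+1}\to\mathbb Z^{n+2}$ is given by $(A^{(n)}v)_i=v_{i-1}+v_i$ (with $v_0=v_{n+2}=0$), with positive cone $G^+$ the union of the images of $\mathbb Z_{\ge0}^{n+1}$ and order unit $u$ the image of $(\binom n0,\binom n1,\dots,\binom nn)\in\mathbb Z^{n+1}$ (for any $n$). Let $\mathbb Z^{(\infty)}$ be the group of integer sequences $(\beta_1,\beta_2,\dots)$ that are eventually $0$, with $\mathbb Z^{n+1}$ identified with the sequences supported in the first $n+1$ coordinates. Define $\Phi_n:\mathbb Z^{n+1}\to\mathbb Z^{(\infty)}$ by $\Phi_n(v)=A_nv$. Then: (a) $\Phi_{n+1}\circ A^{(n)}=\Phi_n$ for all $n\ge1$, and the induced map $G\to\mathbb Z^{(\infty)}$ is a group isomorphism; (b) it maps $u$ to $e_1=(1,0,0,\dots)$; (c) it maps $G^+$ onto $\bigcup_{n\ge1}P_n^+$, where $P_n^+$ is the set of $\beta\in\mathbb Z^{(\infty)}$ supported in the first $n+1$ coordinates such that $\sum_{l=0}^{k}\binom{n-l}{k-l}\beta_{l+1}\ge0$ for all $0\le k\le n$.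
   Context: For $k\ge0$, $A_{k,k+1}\in M_{k+2}(\mathbb Z)$ is the lower bidiagonal matrix with all diagonal entries $1$, all subdiagonal entries $(i+1,i)$ equal to $1$, and all other entries $0$; for $n\ge1$, $A_n=[A_{0,1}^{-1}\oplus I_{n-1}][A_{1,2}^{-1}\oplus I_{n-2}]\cdots[A_{n-2,n-1}^{-1}\oplus I_1]A_{n-1,n}^{-1}\in M_{n+1}(\mathbb Z)$, where $I_m$ is the $m\times m$ identity and $\oplus$ is block-diagonal sum. (In the paper $\mathbb Z^{(\infty)}$ appears as $C(X_{min},\mathbb Z)$, with $\beta$ corresponding to $\sum_r\beta_r\chi_{B(r,r-1)\cap X_{min}}$.) *)

theory Defs
  imports "Jordan_Normal_Form.Matrix"
begin

text \<open>Conventions: coordinates are 0-indexed. The paper's coordinate i (1-based)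
  corresponds to index i-1 here. Z^{n+1} = int vectors of dimension n+1.\<close>

definition Abidiag :: "nat \<Rightarrow> int mat" where
  "Abidiag k = mat (k+2) (k+2) (\<lambda>(i,j). if i = j \<or> i = j + 1 then 1 else 0)"

definition int_mat_inv :: "int mat \<Rightarrow> int mat" where
  "int_mat_inv A = (SOME B. B \<in> carrier_mat (dim_row A) (dim_row A) \<and>
      A * B = 1\<^sub>m (dim_row A) \<and> B * A = 1\<^sub>m (dim_row A))"

definition oplus_id :: "int mat \<Rightarrow> nat \<Rightarrow> int mat" where
  "oplus_id M m = four_block_mat M (0\<^sub>m (dim_row M) m) (0\<^sub>m m (dim_col M)) (1\<^sub>m m)"

text \<open>A_n = [A_{0,1}^{-1} \<oplus> I_{n-1}] ... [A_{n-2,n-1}^{-1} \<oplus> I_1] A_{n-1,n}^{-1}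
  (the last factor is A_{n-1,n}^{-1} \<oplus> I_0), an (n+1)x(n+1) matrix, n \<ge> 1.\<close>
definition Amat :: "nat \<Rightarrow> int mat" where
  "Amat n = foldr (\<lambda>k M. oplus_id (int_mat_inv (Abidiag k)) (n - 1 - k) * M) [0..<n] (1\<^sub>m (n+1))"

definition Aconn :: "nat \<Rightarrow> int mat" where
  "Aconn n = mat (n+2) (n+1) (\<lambda>(i,j). if i = j \<or> i = j + 1 then 1 else 0)"

definition Zinf :: "(nat \<Rightarrow> int) set" where
  "Zinf = {\<beta>. finite {i. \<beta> i \<noteq> 0}}"

definition vec_to_seq :: "int vec \<Rightarrow> nat \<Rightarrow> int" where
  "vec_to_seq v = (\<lambda>i. if i < dim_vec v then v $ i else 0)"

definition Phi :: "nat \<Rightarrow> int vec \<Rightarrow> nat \<Rightarrow> int" where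
  "Phi n v = vec_to_seq (Amat n *\<^sub>v v)"

definition push :: "nat \<Rightarrow> nat \<Rightarrow> int vec \<Rightarrow> int vec" where
  "push n m v = foldl (\<lambda>w j. Aconn j *\<^sub>v w) v [n..<m]"

definition Glevels :: "(nat \<times> int vec) set" where
  "Glevels = {(n, v). n \<ge> 1 \<and> v \<in> carrier_vec (n+1)}"

definition Grel :: "((nat \<times> int vec) \<times> (nat \<times> int vec)) set" where
  "Grel = {((n, v), (m, w)). (n, v) \<in> Glevels \<and> (m, w) \<in> Glevels \<and>
             (\<exists>k \<ge> max n m. push n k v = push m k w)}"

definition Gcarrier :: "(nat \<times> int vec) set set" where
  "Gcarrier = Glevels // Grel"

definition Gcls :: "nat \<Rightarrow> int vec \<Rightarrow> (nat \<times> int vec) set" where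
  "Gcls n v = Grel `` {(n, v)}"

definition Gadd :: "(nat \<times> int vec) set \<Rightarrow> (nat \<times> int vec) set \<Rightarrow> (nat \<times> int vec) set" where
  "Gadd x y = (let (n, v) = (SOME p. p \<in> x); (m, w) = (SOME p. p \<in> y); k = max n m
               in Gcls k (push n k v + push m k w))"

definition Gpos :: "(nat \<times> int vec) set set" where
  "Gpos = {Gcls n v | n v. n \<ge> 1 \<and> v \<in> carrier_vec (n+1) \<and> (\<forall>i < n+1. v $ i \<ge> 0)}"

definition binom_vec :: "nat \<Rightarrow> int vec" where
  "binom_vec n = vec (n+1) (\<lambda>i. int (n choose i))"

definition Phi_lim :: "(nat \<times> int vec) set \<Rightarrow> nat \<Rightarrow> int" where
  "Phi_lim x = (THE \<beta>. \<forall>(n, v) \<in> x. Phi n v = \<beta>)"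

definition e1 :: "nat \<Rightarrow> int" where
  "e1 = (\<lambda>i. if i = 0 then 1 else 0)"

definition Ppos :: "nat \<Rightarrow> (nat \<Rightarrow> int) set" where
  "Ppos n = {\<beta>. (\<forall>i > n. \<beta> i = 0) \<and>
     (\<forall>k \<le> n. (\<Sum>l = 0..k. int ((n - l) choose (k - l)) * \<beta> l) \<ge> 0)}"

end

theory Submission
  imports Defs
begin

text \<open>Since \<open>A\<^sub>n\<^sub>+\<^sub>1 = (A\<^sub>n \<oplus> I\<^sub>1) A\<^bsub>n,n+1\<^esub>\<^sup>-\<^sup>1\<close>, Pascal's rule shows by induction that
  \<open>A\<^sub>n\<close> is invertible over the integers, its inverse \<open>B\<^sub>n\<close> being the lower triangular matrix
  with entries \<open>(n - l) choose (k - l)\<close>. The connecting map is \<open>A\<^sup>(\<^sup>n\<^sup>) v = A\<^bsub>n,n+1\<^esub> (v, 0)\<close>,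
  hence \<open>A\<^sub>n\<^sub>+\<^sub>1 A\<^sup>(\<^sup>n\<^sup>) v = (A\<^sub>n v, 0)\<close> and the maps \<open>\<Phi>\<^sub>n\<close> are compatible. The induced map on
  the limit is injective because every \<open>\<Phi>\<^sub>n\<close> is, and surjective because a sequence \<open>\<beta>\<close>
  supported in the first \<open>n + 1\<close> coordinates equals \<open>\<Phi>\<^sub>n (B\<^sub>n \<beta>)\<close>. The rows of \<open>B\<^sub>n\<close> are
  precisely the linear forms defining \<open>P\<^sub>n\<^sup>+\<close>, so \<open>\<Phi>\<^sub>n v \<in> P\<^sub>n\<^sup>+\<close> iff \<open>v \<ge> 0\<close>; and
  \<open>B\<^sub>n e\<^sub>1\<close> is the vector of binomial coefficients, whose image is therefore \<open>e\<^sub>1\<close>.\<close>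

section \<open>Inverses of the bidiagonal matrices\<close>

lemma sum_bidiag_left:
  fixes f :: "nat \<Rightarrow> 'a::semiring_1"
  shows "(\<Sum>j = 0..<d. (if i = j \<or> i = Suc j then 1 else 0) * f j) =
    (if i < d then f i else 0) + (if 0 < i \<and> i - 1 < d then f (i - 1) else 0)"
proof -
  have "(\<Sum>j = 0..<d. (if i = j \<or> i = Suc j then 1 else 0) * f j) =
     (\<Sum>j = 0..<d. (if i = j then f j else 0) + (if i - 1 = j \<and> 0 < i then f j else 0))"
    by (rule sum.cong) auto
  then show ?thesis
    by (simp add: sum.distrib sum.delta if_distrib[where f = "\<lambda>b. b \<and> _"] conj_commute)
qed

lemma sum_bidiag_right:
  fixes f :: "nat \<Rightarrow> 'a::semiring_1"
  shows "(\<Sum>j = 0..<d. f j * (if j = l \<or> j = Suc l then 1 else 0)) =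
    (if l < d then f l else 0) + (if Suc l < d then f (Suc l) else 0)"
proof -
  have "(\<Sum>j = 0..<d. f j * (if j = l \<or> j = Suc l then 1 else 0)) =
     (\<Sum>j = 0..<d. (if l = j then f j else 0) + (if Suc l = j then f j else 0))"
    by (rule sum.cong) auto
  then show ?thesis by (simp add: sum.distrib)
qed

definition alt_tri_mat :: "nat \<Rightarrow> int mat" where
  "alt_tri_mat k = mat (k+2) (k+2) (\<lambda>(i,j). if j \<le> i then (-1)^(i-j) else 0)"

lemma Abidiag_carrier [simp]: "Abidiag k \<in> carrier_mat (k+2) (k+2)"
  by (simp add: Abidiag_def)

lemma alt_tri_mat_carrier [simp]: "alt_tri_mat k \<in> carrier_mat (k+2) (k+2)"
  by (simp add: alt_tri_mat_def)

lemma neg_one_power_diff_cancel: "j < i \<Longrightarrow> (-1::int)^(i-j) + (-1)^(i - Suc j) = 0"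
  by (simp add: Suc_diff_Suc[symmetric])

lemma Abidiag_alt_tri_mat: "Abidiag k * alt_tri_mat k = 1\<^sub>m (k+2)"
proof (rule eq_matI)
  fix i l assume i: "i < dim_row (1\<^sub>m (k+2))" and l: "l < dim_col (1\<^sub>m (k+2))"
  have "(Abidiag k * alt_tri_mat k) $$ (i,l) =
      (\<Sum>j = 0..<k+2. (if i = j \<or> i = Suc j then 1 else 0) * (if l \<le> j then (-1)^(j-l) else 0))"
    using i l by (simp add: Abidiag_def alt_tri_mat_def scalar_prod_def)
  also have "\<dots> = 1\<^sub>m (k+2) $$ (i,l)"
    unfolding sum_bidiag_left using i l neg_one_power_diff_cancel[of l i] by auto
  finally show "(Abidiag k * alt_tri_mat k) $$ (i,l) = 1\<^sub>m (k+2) $$ (i,l)" .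
qed (auto simp: Abidiag_def alt_tri_mat_def)

lemma alt_tri_mat_Abidiag: "alt_tri_mat k * Abidiag k = 1\<^sub>m (k+2)"
proof (rule eq_matI)
  fix i l assume i: "i < dim_row (1\<^sub>m (k+2))" and l: "l < dim_col (1\<^sub>m (k+2))"
  have "(alt_tri_mat k * Abidiag k) $$ (i,l) =
      (\<Sum>j = 0..<k+2. (if j \<le> i then (-1)^(i-j) else 0) * (if j = l \<or> j = Suc l then 1 else 0))"
    using i l by (simp add: Abidiag_def alt_tri_mat_def scalar_prod_def)
  also have "\<dots> = 1\<^sub>m (k+2) $$ (i,l)"
    unfolding sum_bidiag_right using i l neg_one_power_diff_cancel[of l i] by auto
  finally show "(alt_tri_mat k * Abidiag k) $$ (i,l) = 1\<^sub>m (k+2) $$ (i,l)" .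
qed (auto simp: Abidiag_def alt_tri_mat_def)

lemma int_mat_inv_eqI:
  assumes A: "A \<in> carrier_mat d d" and B: "B \<in> carrier_mat d d"
    and AB: "A * B = 1\<^sub>m d" and BA: "B * A = 1\<^sub>m d"
  shows "int_mat_inv A = B"
proof -
  let ?inv = "\<lambda>C. C \<in> carrier_mat d d \<and> A * C = 1\<^sub>m d \<and> C * A = 1\<^sub>m d"
  have "?inv (int_mat_inv A)"
    unfolding int_mat_inv_def carrier_matD(1)[OF A] by (rule someI[of ?inv B]) (use B AB BA in simp)
  then have C: "int_mat_inv A \<in> carrier_mat d d" and CA: "int_mat_inv A * A = 1\<^sub>m d"
    by auto
  have "int_mat_inv A = (int_mat_inv A * A) * B"
    using C B AB by (simp add: assoc_mult_mat[OF C A B])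
  then show ?thesis using CA B by simp
qed

lemma int_mat_inv_Abidiag: "int_mat_inv (Abidiag k) = alt_tri_mat k"
  by (rule int_mat_inv_eqI[OF Abidiag_carrier alt_tri_mat_carrier
        Abidiag_alt_tri_mat alt_tri_mat_Abidiag])

section \<open>Block sums with an identity matrix\<close>

lemma oplus_id_carrier [simp]: "M \<in> carrier_mat d d \<Longrightarrow> oplus_id M m \<in> carrier_mat (d+m) (d+m)"
  unfolding oplus_id_def by (rule four_block_carrier_mat) auto

lemma oplus_id_dims [simp]:
  "dim_row (oplus_id M m) = dim_row M + m" "dim_col (oplus_id M m) = dim_col M + m"
  unfolding oplus_id_def by auto

lemma index_oplus_id:
  "M \<in> carrier_mat d d \<Longrightarrow> i < d + m \<Longrightarrow> j < d + m \<Longrightarrow>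
    oplus_id M m $$ (i,j) = (if i < d \<and> j < d then M $$ (i,j) else if i = j then 1 else 0)"
  unfolding oplus_id_def by auto

lemma oplus_id_0: "M \<in> carrier_mat d d \<Longrightarrow> oplus_id M 0 = M"
  by (rule eq_matI) (auto simp: index_oplus_id)

lemma oplus_id_oplus_id:
  assumes M: "M \<in> carrier_mat d d"
  shows "oplus_id (oplus_id M a) b = oplus_id M (a+b)"
proof (rule eq_matI)
  fix i j assume "i < dim_row (oplus_id M (a+b))" "j < dim_col (oplus_id M (a+b))"
  then show "oplus_id (oplus_id M a) b $$ (i,j) = oplus_id M (a+b) $$ (i,j)"
    using M by (simp add: index_oplus_id[OF oplus_id_carrier[OF M]] index_oplus_id[OF M])
qed (use M in simp_all)

lemma oplus_id_one_mat: "oplus_id (1\<^sub>m d) m = 1\<^sub>m (d+m)"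
  unfolding oplus_id_def by simp

lemma oplus_id_mult:
  assumes P: "P \<in> carrier_mat d d" and Q: "Q \<in> carrier_mat d d"
  shows "oplus_id P m * oplus_id Q m = oplus_id (P * Q) m"
proof -
  have "oplus_id P m * oplus_id Q m = four_block_mat (P * Q) (0\<^sub>m d m) (0\<^sub>m m d) (1\<^sub>m m)"
    unfolding oplus_id_def carrier_matD[OF P] carrier_matD[OF Q]
    by (subst mult_four_block_mat[OF P _ _ _ Q]) (use P Q in auto)
  then show ?thesis using P Q by (simp add: oplus_id_def)
qed

lemma oplus_id_mult_append_vec:
  assumes "M \<in> carrier_mat d d" and "w \<in> carrier_vec d" and "u \<in> carrier_vec m"
  shows "oplus_id M m *\<^sub>v (w @\<^sub>v u) = (M *\<^sub>v w) @\<^sub>v u"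
  unfolding oplus_id_def using assms by (subst four_block_mat_mult_vec) auto

lemma foldr_mult_mat_carrier:
  fixes F :: "'b \<Rightarrow> 'a::semiring_1 mat"
  assumes "\<forall>k\<in>set xs. F k \<in> carrier_mat d d"
  shows "foldr (\<lambda>k M. F k * M) xs (1\<^sub>m d) \<in> carrier_mat d d"
  using assms by (induction xs) auto

lemma foldr_mult_mat_right:
  fixes F :: "'b \<Rightarrow> 'a::semiring_1 mat"
  assumes "\<forall>k\<in>set xs. F k \<in> carrier_mat d d" and N: "N \<in> carrier_mat d c"
  shows "foldr (\<lambda>k M. F k * M) xs N = foldr (\<lambda>k M. F k * M) xs (1\<^sub>m d) * N"
  using assms(1)
proof (induction xs)
  case (Cons a xs)
  have Fa: "F a \<in> carrier_mat d d" and Fs: "\<forall>k\<in>set xs. F k \<in> carrier_mat d d"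
    using Cons.prems by auto
  show ?case
    using Cons.IH[OF Fs] assoc_mult_mat[OF Fa foldr_mult_mat_carrier[OF Fs] N] by simp
qed (use N in simp)

lemma foldr_oplus_id:
  assumes "\<forall>k\<in>set xs. F k \<in> carrier_mat d d"
  shows "foldr (\<lambda>k M. oplus_id (F k) m * M) xs (1\<^sub>m (d+m))
       = oplus_id (foldr (\<lambda>k M. F k * M) xs (1\<^sub>m d)) m"
  using assms
proof (induction xs)
  case Nil
  then show ?case by (simp add: oplus_id_one_mat)
next
  case (Cons a xs)
  have Fa: "F a \<in> carrier_mat d d" and Fs: "\<forall>k\<in>set xs. F k \<in> carrier_mat d d"
    using Cons.prems by auto
  show ?case
    using Cons.IH[OF Fs] oplus_id_mult[OF Fa foldr_mult_mat_carrier[OF Fs]] by simp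
qed

section \<open>The matrices \<open>A\<^sub>n\<close> and their binomial inverses\<close>

lemma Amat_alt_tri_mat:
  "Amat n = foldr (\<lambda>k M. oplus_id (alt_tri_mat k) (n - 1 - k) * M) [0..<n] (1\<^sub>m (n+1))"
  unfolding Amat_def int_mat_inv_Abidiag ..

lemma Amat_factors_carrier:
  "\<forall>k\<in>set [0..<n]. oplus_id (alt_tri_mat k) (n - 1 - k) \<in> carrier_mat (n+1) (n+1)"
proof
  fix k assume "k \<in> set [0..<n]"
  then show "oplus_id (alt_tri_mat k) (n - 1 - k) \<in> carrier_mat (n+1) (n+1)"
    using oplus_id_carrier[OF alt_tri_mat_carrier, of k "n - 1 - k"] by simp
qed

lemma Amat_carrier [simp]: "Amat n \<in> carrier_mat (n+1) (n+1)"
  unfolding Amat_alt_tri_mat by (rule foldr_mult_mat_carrier[OF Amat_factors_carrier])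

lemma Amat_dims [simp]: "dim_row (Amat n) = n+1" "dim_col (Amat n) = n+1"
  using Amat_carrier[of n] by (simp_all del: Amat_carrier)

lemma Amat_Suc: "Amat (Suc n) = oplus_id (Amat n) 1 * alt_tri_mat n"
proof -
  let ?F = "\<lambda>k. oplus_id (alt_tri_mat k) (n - k)"
  have F: "\<forall>k\<in>set [0..<n]. ?F k \<in> carrier_mat (n+2) (n+2)"
    using Amat_factors_carrier[of "Suc n"] by simp
  have F_lift: "?F k = oplus_id (oplus_id (alt_tri_mat k) (n - 1 - k)) 1" if "k \<in> set [0..<n]" for k
    using that by (simp add: oplus_id_oplus_id[OF alt_tri_mat_carrier] Suc_diff_Suc)
  have "Amat (Suc n) = foldr (\<lambda>k M. ?F k * M) [0..<n] (oplus_id (alt_tri_mat n) 0 * 1\<^sub>m (n+2))"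
    unfolding Amat_alt_tri_mat by simp
  also have "\<dots> = foldr (\<lambda>k M. ?F k * M) [0..<n] (alt_tri_mat n)"
    using alt_tri_mat_carrier[of n] by (simp add: oplus_id_0)
  also have "\<dots> = foldr (\<lambda>k M. ?F k * M) [0..<n] (1\<^sub>m (n+2)) * alt_tri_mat n"
    by (rule foldr_mult_mat_right[OF F alt_tri_mat_carrier])
  also have "foldr (\<lambda>k M. ?F k * M) [0..<n] (1\<^sub>m (n+2))
      = foldr (\<lambda>k M. oplus_id (oplus_id (alt_tri_mat k) (n - 1 - k)) 1 * M) [0..<n] (1\<^sub>m (n+1+1))"
    using F_lift by (intro foldr_cong) simp_all
  also have "\<dots> = oplus_id (Amat n) 1"
    unfolding Amat_alt_tri_mat by (rule foldr_oplus_id[OF Amat_factors_carrier])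
  finally show ?thesis .
qed

definition binom_mat :: "nat \<Rightarrow> int mat" where
  "binom_mat n = mat (n+1) (n+1) (\<lambda>(k,l). if l \<le> k then int ((n - l) choose (k - l)) else 0)"

lemma binom_mat_carrier [simp]: "binom_mat n \<in> carrier_mat (n+1) (n+1)"
  by (simp add: binom_mat_def)

lemma binom_mat_dims [simp]: "dim_row (binom_mat n) = n+1" "dim_col (binom_mat n) = n+1"
  by (simp_all add: binom_mat_def)

lemma binom_mat_mult_vec_carrier: "binom_mat n *\<^sub>v u \<in> carrier_vec (n+1)"
  by (rule carrier_vecI) simp

lemma index_binom_mat_mult_vec:
  assumes k: "k \<le> n"
  shows "(binom_mat n *\<^sub>v vec (n+1) \<beta>) $ k = (\<Sum>l = 0..k. int ((n - l) choose (k - l)) * \<beta> l)"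
proof -
  have "(binom_mat n *\<^sub>v vec (n+1) \<beta>) $ k = (\<Sum>l = 0..<n+1. binom_mat n $$ (k,l) * \<beta> l)"
    using k by (simp add: scalar_prod_def)
  also have "\<dots> = (\<Sum>l = 0..<n+1. if l \<le> k then int ((n - l) choose (k - l)) * \<beta> l else 0)"
    using k by (intro sum.cong) (auto simp: binom_mat_def)
  also have "\<dots> = (\<Sum>l \<in> {l \<in> {0..<n+1}. l \<le> k}. int ((n - l) choose (k - l)) * \<beta> l)"
    by (rule sum.inter_filter[symmetric]) simp
  also have "{l \<in> {0..<n+1}. l \<le> k} = {0..k}"
    using k by auto
  finally show ?thesis .
qed

text \<open>For \<open>l = n + 1\<close> the truncated difference \<open>n - l\<close> is \<open>0\<close>, so the binomial formula
  also produces the appended identity block.\<close>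
lemma oplus_id_binom_mat:
  "oplus_id (binom_mat n) 1 =
    mat (n+2) (n+2) (\<lambda>(k,l). if l \<le> k then int ((n - l) choose (k - l)) else 0)"
proof (rule eq_matI)
  fix k l assume "k < dim_row (mat (n+2) (n+2) (\<lambda>(k,l). if l \<le> k then int ((n - l) choose (k - l)) else 0))"
    and "l < dim_col (mat (n+2) (n+2) (\<lambda>(k,l). if l \<le> k then int ((n - l) choose (k - l)) else 0))"
  then have k: "k < n+1+1" and l: "l < n+1+1" by simp_all
  have "oplus_id (binom_mat n) 1 $$ (k,l) =
      (if k < n+1 \<and> l < n+1 then binom_mat n $$ (k,l) else if k = l then 1 else 0)"
    by (rule index_oplus_id[OF binom_mat_carrier k l])
  then show "oplus_id (binom_mat n) 1 $$ (k,l) =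
      mat (n+2) (n+2) (\<lambda>(k,l). if l \<le> k then int ((n - l) choose (k - l)) else 0) $$ (k,l)"
    using k l by (auto simp: binom_mat_def)
qed simp_all

lemma binom_Suc_diff:
  assumes "l < k" and "k \<le> Suc n"
  shows "(Suc n - l) choose (k - l) = ((n - l) choose (k - 1 - l)) + ((n - l) choose (k - l))"
proof -
  have "Suc n - l = Suc (n - l)" and "k - l = Suc (k - 1 - l)"
    using assms by auto
  then show ?thesis by simp
qed

lemma binom_mat_Suc: "binom_mat (Suc n) = Abidiag n * oplus_id (binom_mat n) 1"
proof (rule eq_matI)
  fix k l assume "k < dim_row (Abidiag n * oplus_id (binom_mat n) 1)"
    and "l < dim_col (Abidiag n * oplus_id (binom_mat n) 1)"
  then have k: "k < n+2" and l: "l < n+2" by (simp_all add: Abidiag_def)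
  define c where "c j = (if l \<le> j then int ((n - l) choose (j - l)) else 0)" for j
  have "(Abidiag n * oplus_id (binom_mat n) 1) $$ (k,l) =
      (\<Sum>j = 0..<n+2. (if k = j \<or> k = Suc j then 1 else 0) * c j)"
    unfolding oplus_id_binom_mat using k l by (simp add: Abidiag_def scalar_prod_def c_def)
  also have "\<dots> = c k + (if 0 < k then c (k - 1) else 0)"
    using k unfolding sum_bidiag_left by auto
  also have "\<dots> = binom_mat (Suc n) $$ (k,l)"
    using k l binom_Suc_diff[of l k n] by (auto simp: binom_mat_def c_def)
  finally show "binom_mat (Suc n) $$ (k,l) = (Abidiag n * oplus_id (binom_mat n) 1) $$ (k,l)"
    by (rule sym)
qed (simp_all add: Abidiag_def binom_mat_def)

lemma Amat_binom_mat_inverse: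
  "Amat n * binom_mat n = 1\<^sub>m (n+1) \<and> binom_mat n * Amat n = 1\<^sub>m (n+1)"
proof (induction n)
  case 0
  have "binom_mat 0 = 1\<^sub>m 1"
    by (rule eq_matI) (auto simp: binom_mat_def)
  then show ?case by (simp add: Amat_def)
next
  case (Suc n)
  let ?A = "oplus_id (Amat n) 1" and ?B = "oplus_id (binom_mat n) 1"
  have A: "?A \<in> carrier_mat (n+2) (n+2)" and B: "?B \<in> carrier_mat (n+2) (n+2)"
    using oplus_id_carrier[OF Amat_carrier, of n 1] oplus_id_carrier[OF binom_mat_carrier, of n 1]
    by simp_all
  have AB: "?A * ?B = 1\<^sub>m (n+2)" and BA: "?B * ?A = 1\<^sub>m (n+2)"
    using Suc.IH oplus_id_mult[OF Amat_carrier binom_mat_carrier, of n 1]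
      oplus_id_mult[OF binom_mat_carrier Amat_carrier, of n 1] oplus_id_one_mat[of "n+1" 1]
    by simp_all
  note W = alt_tri_mat_carrier[of n] and D = Abidiag_carrier[of n]
  have "Amat (Suc n) * binom_mat (Suc n) = ?A * ((alt_tri_mat n * Abidiag n) * ?B)"
    unfolding Amat_Suc binom_mat_Suc
    using A B W D by (simp add: assoc_mult_mat[of _ "n+2" "n+2" _ "n+2" _ "n+2"])
  also have "\<dots> = 1\<^sub>m (n+2)"
    using alt_tri_mat_Abidiag[of n] AB B by simp
  finally have AB': "Amat (Suc n) * binom_mat (Suc n) = 1\<^sub>m (Suc n + 1)" by simp
  have "binom_mat (Suc n) * Amat (Suc n) = Abidiag n * ((?B * ?A) * alt_tri_mat n)"
    unfolding Amat_Suc binom_mat_Suc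
    using A B W D by (simp add: assoc_mult_mat[of _ "n+2" "n+2" _ "n+2" _ "n+2"])
  also have "\<dots> = 1\<^sub>m (n+2)"
    using Abidiag_alt_tri_mat[of n] BA W by simp
  finally have BA': "binom_mat (Suc n) * Amat (Suc n) = 1\<^sub>m (Suc n + 1)" by simp
  show ?case using AB' BA' ..
qed

lemma binom_mat_Amat_mult_vec: "v \<in> carrier_vec (n+1) \<Longrightarrow> binom_mat n *\<^sub>v (Amat n *\<^sub>v v) = v"
  using Amat_binom_mat_inverse[of n]
  by (metis Amat_carrier binom_mat_carrier assoc_mult_mat_vec one_mult_mat_vec)

lemma Amat_binom_mat_mult_vec: "v \<in> carrier_vec (n+1) \<Longrightarrow> Amat n *\<^sub>v (binom_mat n *\<^sub>v v) = v"
  using Amat_binom_mat_inverse[of n]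
  by (metis Amat_carrier binom_mat_carrier assoc_mult_mat_vec one_mult_mat_vec)

section \<open>Compatibility with the connecting maps\<close>

lemma Aconn_carrier_mat: "Aconn n \<in> carrier_mat (n+2) (n+1)"
  by (simp add: Aconn_def)

lemma Aconn_carrier: "v \<in> carrier_vec (n+1) \<Longrightarrow> Aconn n *\<^sub>v v \<in> carrier_vec (n+2)"
  by (rule mult_mat_vec_carrier[OF Aconn_carrier_mat])

lemma Aconn_mult_vec:
  assumes v: "v \<in> carrier_vec (n+1)"
  shows "Aconn n *\<^sub>v v = Abidiag n *\<^sub>v (v @\<^sub>v 0\<^sub>v 1)"
proof (rule eq_vecI)
  fix i assume "i < dim_vec (Abidiag n *\<^sub>v (v @\<^sub>v 0\<^sub>v 1))"
  then have i: "i < n+2" by (simp add: Abidiag_def)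
  have "(Abidiag n *\<^sub>v (v @\<^sub>v 0\<^sub>v 1)) $ i = (\<Sum>j = 0..<Suc (n+1). Abidiag n $$ (i,j) * (v @\<^sub>v 0\<^sub>v 1) $ j)"
    using i v by (simp add: scalar_prod_def Abidiag_def)
  also have "\<dots> = (\<Sum>j = 0..<n+1. Aconn n $$ (i,j) * v $ j)"
    using i v by (simp add: Abidiag_def Aconn_def)
  also have "\<dots> = (Aconn n *\<^sub>v v) $ i"
    using i v by (simp add: scalar_prod_def Aconn_def)
  finally show "(Aconn n *\<^sub>v v) $ i = (Abidiag n *\<^sub>v (v @\<^sub>v 0\<^sub>v 1)) $ i" by (rule sym)
qed (simp add: Aconn_def Abidiag_def)

lemma Amat_Suc_Aconn:
  assumes v: "v \<in> carrier_vec (n+1)"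
  shows "Amat (Suc n) *\<^sub>v (Aconn n *\<^sub>v v) = (Amat n *\<^sub>v v) @\<^sub>v 0\<^sub>v 1"
proof -
  have A: "oplus_id (Amat n) 1 \<in> carrier_mat (n+2) (n+2)"
    using oplus_id_carrier[OF Amat_carrier, of n 1] by simp
  have v0: "v @\<^sub>v 0\<^sub>v 1 \<in> carrier_vec (n+2)"
    using append_carrier_vec[OF v zero_carrier_vec[of 1]] by simp
  have "Amat (Suc n) *\<^sub>v (Aconn n *\<^sub>v v)
      = oplus_id (Amat n) 1 *\<^sub>v ((alt_tri_mat n * Abidiag n) *\<^sub>v (v @\<^sub>v 0\<^sub>v 1))"
    unfolding Amat_Suc Aconn_mult_vec[OF v]
    using A v0 alt_tri_mat_carrier[of n] Abidiag_carrier[of n]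
    by (simp add: assoc_mult_mat_vec[of _ "n+2" "n+2" _ "n+2"])
  also have "\<dots> = oplus_id (Amat n) 1 *\<^sub>v (v @\<^sub>v 0\<^sub>v 1)"
    using alt_tri_mat_Abidiag[of n] v0 by simp
  also have "\<dots> = (Amat n *\<^sub>v v) @\<^sub>v 0\<^sub>v 1"
    using v by (intro oplus_id_mult_append_vec) auto
  finally show ?thesis .
qed

lemma vec_to_seq_append_zero: "vec_to_seq (w @\<^sub>v 0\<^sub>v m) = vec_to_seq w"
  by (rule ext) (simp add: vec_to_seq_def)

lemma Phi_Suc_Aconn: "v \<in> carrier_vec (n+1) \<Longrightarrow> Phi (n+1) (Aconn n *\<^sub>v v) = Phi n v"
  unfolding Phi_def by (simp add: Amat_Suc_Aconn vec_to_seq_append_zero)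

lemma Phi_eq_0: "v \<in> carrier_vec (n+1) \<Longrightarrow> n < i \<Longrightarrow> Phi n v i = 0"
  by (simp add: Phi_def vec_to_seq_def)

lemma Phi_in_Zinf:
  assumes "v \<in> carrier_vec (n+1)"
  shows "Phi n v \<in> Zinf"
proof -
  have "{i. Phi n v i \<noteq> 0} \<subseteq> {..n}"
    using Phi_eq_0[OF assms] by (auto simp: not_le[symmetric])
  then show ?thesis
    unfolding Zinf_def using finite_subset by blast
qed

lemma Phi_add:
  assumes "v \<in> carrier_vec (n+1)" and "w \<in> carrier_vec (n+1)"
  shows "Phi n (v + w) = (\<lambda>i. Phi n v i + Phi n w i)"
  using assms by (auto simp: Phi_def vec_to_seq_def mult_add_distrib_mat_vec[OF Amat_carrier])

lemma vec_Phi: "v \<in> carrier_vec (n+1) \<Longrightarrow> vec (n+1) (Phi n v) = Amat n *\<^sub>v v"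
  by (auto simp: Phi_def vec_to_seq_def)

lemma binom_mat_mult_vec_Phi:
  assumes "v \<in> carrier_vec (n+1)"
  shows "binom_mat n *\<^sub>v vec (n+1) (Phi n v) = v"
  unfolding vec_Phi[OF assms] by (rule binom_mat_Amat_mult_vec[OF assms])

lemma Phi_binom_mat_mult_vec:
  assumes "\<forall>i>n. \<beta> i = 0"
  shows "Phi n (binom_mat n *\<^sub>v vec (n+1) \<beta>) = \<beta>"
proof
  fix i show "Phi n (binom_mat n *\<^sub>v vec (n+1) \<beta>) i = \<beta> i"
    using assms by (simp add: Phi_def Amat_binom_mat_mult_vec vec_to_seq_def)
qed

lemma Phi_inj:
  "v \<in> carrier_vec (n+1) \<Longrightarrow> w \<in> carrier_vec (n+1) \<Longrightarrow> Phi n v = Phi n w \<Longrightarrow> v = w"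
  by (metis binom_mat_mult_vec_Phi)

section \<open>The inductive limit\<close>

lemma push_Suc: "n \<le> m \<Longrightarrow> push n (Suc m) v = Aconn m *\<^sub>v push n m v"
  by (simp add: push_def)

lemma push_carrier: "n \<le> m \<Longrightarrow> v \<in> carrier_vec (n+1) \<Longrightarrow> push n m v \<in> carrier_vec (m+1)"
proof (induction m rule: dec_induct)
  case (step m)
  then show ?case
    using Aconn_carrier[of "push n m v" m] by (simp add: push_Suc)
qed (simp add: push_def)

lemma Phi_push: "n \<le> m \<Longrightarrow> v \<in> carrier_vec (n+1) \<Longrightarrow> Phi m (push n m v) = Phi n v"
proof (induction m rule: dec_induct)
  case (step m)
  then show ?case
    using Phi_Suc_Aconn[OF push_carrier] by (simp add: push_Suc)
qed (simp add: push_def)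

lemma Grel_iff: "((n,v),(m,w)) \<in> Grel \<longleftrightarrow> (n,v) \<in> Glevels \<and> (m,w) \<in> Glevels \<and> Phi n v = Phi m w"
proof
  assume "((n,v),(m,w)) \<in> Grel"
  then obtain k where L: "(n,v) \<in> Glevels" "(m,w) \<in> Glevels"
    and k: "max n m \<le> k" "push n k v = push m k w"
    unfolding Grel_def by auto
  have "Phi n v = Phi k (push n k v)"
    using Phi_push[of n k v] k L by (simp add: Glevels_def)
  also have "\<dots> = Phi m w"
    using Phi_push[of m k w] k L by (simp add: Glevels_def)
  finally show "(n,v) \<in> Glevels \<and> (m,w) \<in> Glevels \<and> Phi n v = Phi m w"
    using L by simp
next
  assume H: "(n,v) \<in> Glevels \<and> (m,w) \<in> Glevels \<and> Phi n v = Phi m w"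
  let ?k = "max n m"
  have "push n ?k v \<in> carrier_vec (?k+1)" "push m ?k w \<in> carrier_vec (?k+1)"
    and "Phi ?k (push n ?k v) = Phi ?k (push m ?k w)"
    using H push_carrier[of n ?k v] push_carrier[of m ?k w] Phi_push[of n ?k v] Phi_push[of m ?k w]
    by (simp_all add: Glevels_def)
  then have "push n ?k v = push m ?k w"
    by (rule Phi_inj)
  then have "\<exists>k \<ge> max n m. push n k v = push m k w"
    by blast
  then show "((n,v),(m,w)) \<in> Grel"
    using H unfolding Grel_def by simp
qed

lemma Gcls_eq: "(n,v) \<in> Glevels \<Longrightarrow> Gcls n v = {(m,w). (m,w) \<in> Glevels \<and> Phi m w = Phi n v}"
  unfolding Gcls_def using Grel_iff by auto

lemma Phi_lim_Gcls:
  assumes "(n,v) \<in> Glevels"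
  shows "Phi_lim (Gcls n v) = Phi n v"
  unfolding Phi_lim_def
proof (rule the_equality)
  show "\<forall>(m,w) \<in> Gcls n v. Phi m w = Phi n v"
    using Gcls_eq[OF assms] by auto
next
  fix \<beta> assume "\<forall>(m,w) \<in> Gcls n v. Phi m w = \<beta>"
  moreover have "(n,v) \<in> Gcls n v"
    using Gcls_eq[OF assms] assms by simp
  ultimately show "\<beta> = Phi n v" by auto
qed

lemma Gcarrier_iff: "x \<in> Gcarrier \<longleftrightarrow> (\<exists>n v. (n,v) \<in> Glevels \<and> x = Gcls n v)"
  unfolding Gcarrier_def quotient_def Gcls_def by auto

lemma Gcarrier_memD:
  assumes "x \<in> Gcarrier" and "(m,w) \<in> x"
  shows "(m,w) \<in> Glevels \<and> Phi m w = Phi_lim x"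
proof -
  obtain n v where L: "(n,v) \<in> Glevels" and x: "x = Gcls n v"
    using assms(1) unfolding Gcarrier_iff by blast
  have "Phi_lim x = Phi n v"
    unfolding x by (rule Phi_lim_Gcls[OF L])
  moreover have "(m,w) \<in> Glevels \<and> Phi m w = Phi n v"
    using assms(2) unfolding x Gcls_eq[OF L] by simp
  ultimately show ?thesis by simp
qed

lemma some_in_Gcarrier:
  assumes "x \<in> Gcarrier"
  shows "(SOME p. p \<in> x) \<in> x"
proof -
  obtain n v where L: "(n,v) \<in> Glevels" and x: "x = Gcls n v"
    using assms unfolding Gcarrier_iff by blast
  have "(n,v) \<in> x"
    using L unfolding x Gcls_eq[OF L] by simp
  then show ?thesis by (rule someI)
qed

lemma Gcarrier_eq_fibre:
  assumes "x \<in> Gcarrier"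
  shows "x = {(m,w). (m,w) \<in> Glevels \<and> Phi m w = Phi_lim x}"
proof -
  obtain n v where L: "(n,v) \<in> Glevels" and x: "x = Gcls n v"
    using assms unfolding Gcarrier_iff by blast
  have "Phi_lim x = Phi n v"
    unfolding x by (rule Phi_lim_Gcls[OF L])
  then show ?thesis
    unfolding x Gcls_eq[OF L] by simp
qed

lemma Zinf_bounded_support:
  assumes "\<beta> \<in> Zinf"
  obtains n where "1 \<le> n" and "\<forall>i>n. \<beta> i = 0"
proof -
  obtain M where M: "\<forall>i \<in> {i. \<beta> i \<noteq> 0}. i \<le> M"
    using assms finite_nat_set_iff_bounded_le unfolding Zinf_def by blast
  show ?thesis
    by (rule that[of "max 1 M"]) (use M in auto)
qed

lemma bij_betw_Phi_lim: "bij_betw Phi_lim Gcarrier Zinf"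
proof (rule bij_betwI')
  fix x y assume x: "x \<in> Gcarrier" and y: "y \<in> Gcarrier"
  show "(Phi_lim x = Phi_lim y) = (x = y)"
  proof
    assume eq: "Phi_lim x = Phi_lim y"
    have "x = {(m,w). (m,w) \<in> Glevels \<and> Phi m w = Phi_lim x}"
      by (rule Gcarrier_eq_fibre[OF x])
    also have "\<dots> = y"
      unfolding eq by (rule Gcarrier_eq_fibre[OF y, symmetric])
    finally show "x = y" .
  qed simp
next
  fix x assume "x \<in> Gcarrier"
  then obtain n v where L: "(n,v) \<in> Glevels" and x: "x = Gcls n v"
    unfolding Gcarrier_iff by blast
  show "Phi_lim x \<in> Zinf"
    using L Phi_in_Zinf unfolding x Phi_lim_Gcls[OF L] by (simp add: Glevels_def)
next
  fix \<beta> assume "\<beta> \<in> Zinf"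
  then obtain n where n: "1 \<le> n" and \<beta>: "\<forall>i>n. \<beta> i = 0"
    by (rule Zinf_bounded_support)
  let ?v = "binom_mat n *\<^sub>v vec (n+1) \<beta>"
  have L: "(n, ?v) \<in> Glevels"
    using n binom_mat_mult_vec_carrier by (simp add: Glevels_def)
  show "\<exists>x \<in> Gcarrier. \<beta> = Phi_lim x"
  proof
    show "Gcls n ?v \<in> Gcarrier"
      using L unfolding Gcarrier_iff by blast
    show "\<beta> = Phi_lim (Gcls n ?v)"
      unfolding Phi_lim_Gcls[OF L] Phi_binom_mat_mult_vec[OF \<beta>] ..
  qed
qed

lemma Phi_lim_Gadd:
  assumes x: "x \<in> Gcarrier" and y: "y \<in> Gcarrier"
  shows "Phi_lim (Gadd x y) = (\<lambda>i. Phi_lim x i + Phi_lim y i)"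
proof -
  obtain n v where nv: "(SOME p. p \<in> x) = (n,v)" by fastforce
  obtain m w where mw: "(SOME p. p \<in> y) = (m,w)" by fastforce
  have n: "(n,v) \<in> Glevels \<and> Phi n v = Phi_lim x"
    using Gcarrier_memD[OF x] some_in_Gcarrier[OF x] unfolding nv by blast
  have m: "(m,w) \<in> Glevels \<and> Phi m w = Phi_lim y"
    using Gcarrier_memD[OF y] some_in_Gcarrier[OF y] unfolding mw by blast
  let ?k = "max n m"
  have v: "push n ?k v \<in> carrier_vec (?k+1)" "Phi ?k (push n ?k v) = Phi n v"
    using n push_carrier[of n ?k v] Phi_push[of n ?k v] by (simp_all add: Glevels_def)
  have w: "push m ?k w \<in> carrier_vec (?k+1)" "Phi ?k (push m ?k w) = Phi m w"
    using m push_carrier[of m ?k w] Phi_push[of m ?k w] by (simp_all add: Glevels_def)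
  have L: "(?k, push n ?k v + push m ?k w) \<in> Glevels"
    using n v(1) w(1) by (auto simp: Glevels_def)
  have "Gadd x y = Gcls ?k (push n ?k v + push m ?k w)"
    unfolding Gadd_def nv mw by (simp add: Let_def)
  then have "Phi_lim (Gadd x y) = Phi ?k (push n ?k v + push m ?k w)"
    by (simp only: Phi_lim_Gcls[OF L])
  also have "\<dots> = (\<lambda>i. Phi ?k (push n ?k v) i + Phi ?k (push m ?k w) i)"
    by (rule Phi_add[OF v(1) w(1)])
  also have "\<dots> = (\<lambda>i. Phi_lim x i + Phi_lim y i)"
    using n m v(2) w(2) by simp
  finally show ?thesis .
qed

lemma binom_vec_eq: "binom_vec n = binom_mat n *\<^sub>v vec (n+1) e1"
proof (rule eq_vecI)
  fix k assume "k < dim_vec (binom_mat n *\<^sub>v vec (n+1) e1)"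
  then have k: "k \<le> n" by simp
  have "(binom_mat n *\<^sub>v vec (n+1) e1) $ k = (\<Sum>l = 0..k. int ((n - l) choose (k - l)) * e1 l)"
    by (rule index_binom_mat_mult_vec[OF k])
  also have "\<dots> = (\<Sum>l = 0..k. if l = 0 then int (n choose k) else 0)"
    by (intro sum.cong) (auto simp: e1_def)
  also have "\<dots> = int (n choose k)"
    by simp
  finally show "binom_vec n $ k = (binom_mat n *\<^sub>v vec (n+1) e1) $ k"
    using k by (simp add: binom_vec_def)
qed (simp add: binom_vec_def)

lemma Phi_lim_unit:
  assumes "1 \<le> n"
  shows "Phi_lim (Gcls n (binom_vec n)) = e1"
proof -
  have "(n, binom_vec n) \<in> Glevels"
    using assms by (simp add: Glevels_def binom_vec_def)
  then have "Phi_lim (Gcls n (binom_vec n)) = Phi n (binom_mat n *\<^sub>v vec (n+1) e1)"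
    by (simp only: Phi_lim_Gcls binom_vec_eq)
  also have "\<dots> = e1"
    by (rule Phi_binom_mat_mult_vec) (simp add: e1_def)
  finally show ?thesis .
qed

lemma Ppos_iff:
  "\<beta> \<in> Ppos n \<longleftrightarrow> (\<forall>i>n. \<beta> i = 0) \<and> (\<forall>k \<le> n. 0 \<le> (binom_mat n *\<^sub>v vec (n+1) \<beta>) $ k)"
  unfolding Ppos_def using index_binom_mat_mult_vec[of _ n \<beta>] by auto

lemma Phi_lim_Gpos: "Phi_lim ` Gpos = (\<Union>n \<in> {1..}. Ppos n)"
proof (intro equalityI subsetI)
  fix \<beta> assume "\<beta> \<in> Phi_lim ` Gpos"
  then obtain n v where n: "1 \<le> n" and v: "v \<in> carrier_vec (n+1)"
    and pos: "\<forall>i < n+1. 0 \<le> v $ i" and \<beta>: "\<beta> = Phi_lim (Gcls n v)"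
    unfolding Gpos_def by blast
  have "\<beta> = Phi n v"
    using n v \<beta> by (simp add: Phi_lim_Gcls Glevels_def)
  then have "\<beta> \<in> Ppos n"
    unfolding Ppos_iff using Phi_eq_0[OF v] binom_mat_mult_vec_Phi[OF v] pos by auto
  then show "\<beta> \<in> (\<Union>n \<in> {1..}. Ppos n)"
    using n by auto
next
  fix \<beta> assume "\<beta> \<in> (\<Union>n \<in> {1..}. Ppos n)"
  then obtain n where n: "1 \<le> n" and "\<beta> \<in> Ppos n" by auto
  then have \<beta>: "\<forall>i>n. \<beta> i = 0" and pos: "\<forall>k \<le> n. 0 \<le> (binom_mat n *\<^sub>v vec (n+1) \<beta>) $ k"
    unfolding Ppos_iff by auto
  let ?v = "binom_mat n *\<^sub>v vec (n+1) \<beta>"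
  have v: "?v \<in> carrier_vec (n+1)"
    by (rule binom_mat_mult_vec_carrier)
  have "\<forall>i < n+1. 0 \<le> ?v $ i"
    using pos by auto
  then have G: "Gcls n ?v \<in> Gpos"
    unfolding Gpos_def using n v by blast
  have L: "(n, ?v) \<in> Glevels"
    using n v by (simp add: Glevels_def)
  have "\<beta> = Phi_lim (Gcls n ?v)"
    unfolding Phi_lim_Gcls[OF L] Phi_binom_mat_mult_vec[OF \<beta>] ..
  with G show "\<beta> \<in> Phi_lim ` Gpos" by blast
qed

theorem mainTheorem11:
  shows "(\<forall>n \<ge> 1. \<forall>v \<in> carrier_vec (n+1). Phi (n+1) (Aconn n *\<^sub>v v) = Phi n v)
       \<and> bij_betw Phi_lim Gcarrier Zinf
       \<and> (\<forall>x \<in> Gcarrier. \<forall>y \<in> Gcarrier. Phi_lim (Gadd x y) = (\<lambda>i. Phi_lim x i + Phi_lim y i))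
       \<and> (\<forall>n \<ge> 1. Phi_lim (Gcls n (binom_vec n)) = e1)
       \<and> Phi_lim ` Gpos = (\<Union>n \<in> {1..}. Ppos n)"
proof (intro conjI)
  show "\<forall>n \<ge> 1. \<forall>v \<in> carrier_vec (n+1). Phi (n+1) (Aconn n *\<^sub>v v) = Phi n v"
    using Phi_Suc_Aconn by blast
  show "\<forall>x \<in> Gcarrier. \<forall>y \<in> Gcarrier. Phi_lim (Gadd x y) = (\<lambda>i. Phi_lim x i + Phi_lim y i)"
    using Phi_lim_Gadd by blast
  show "\<forall>n \<ge> 1. Phi_lim (Gcls n (binom_vec n)) = e1"
    using Phi_lim_unit by blast
qed (rule bij_betw_Phi_lim Phi_lim_Gpos)+

end
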